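(* Let $\lambda>0$ be a random variable with density $\pi(\lambda)$ on $(0,\infty)$, and let $\beta\mid\lambda\sim\mathcal{N}(0,\lambda)$ (variance $\lambda$), so that $\beta$ has marginal density $\pi(\beta)=\int_0^\infty \pi(\beta\mid\lambda)\pi(\lambda)\,d\lambda$. Then $\pi(\beta)$ is heavy-tailed if and only if $\pi(\lambda)$ is heavy-tailed.
   Context: A density $f$ (on $\mathbb{R}$, or on $(0,\infty)$ extended by zero) is heavy-tailed if $\int f(x)e^{tx}\,dx=\infty$ for all $t>0$. *)

theory Defs
  imports "HOL-Probability.Probability"
begin

definition heavy_tailed :: "(real \<Rightarrow> ennreal) \<Rightarrow> bool" where
  "heavy_tailed f \<longleftrightarrow> (\<forall>t::real>0. (\<integral>\<^sup>+ x. f x * ennreal (exp (t * x)) \<partial>lborel) = \<infinity>)"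

text \<open>Marginal density of beta when beta given lambda is N(0, lambda) (variance lambda)
  and lambda has density p on (0, infinity).\<close>
definition scale_mixture_density :: "(real \<Rightarrow> real) \<Rightarrow> real \<Rightarrow> ennreal" where
  "scale_mixture_density p b =
     (\<integral>\<^sup>+ l. indicator {0<..} l * ennreal (normal_density 0 (sqrt l) b * p l) \<partial>lborel)"

end

theory Submission
  imports Defs
begin

text \<open>Given \<open>\<lambda>\<close>, \<open>\<beta>\<close> is \<open>N(0, \<lambda>)\<close>, whose moment generating function is \<open>exp (t\<^sup>2 \<lambda> / 2)\<close>.
  By Tonelli, the exponential moment of \<open>\<beta>\<close> at \<open>t\<close> is therefore the exponential moment of
  \<open>\<lambda>\<close> at \<open>t\<^sup>2 / 2\<close>, and \<open>t \<mapsto> t\<^sup>2 / 2\<close> maps \<open>(0, \<infinity>)\<close> onto itself.\<close>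

lemma normal_density_mult_exp:
  assumes "\<sigma> > 0"
  shows "normal_density \<mu> \<sigma> x * exp (t * x)
    = exp (t * \<mu> + t\<^sup>2 * \<sigma>\<^sup>2 / 2) * normal_density (\<mu> + t * \<sigma>\<^sup>2) \<sigma> x"
proof -
  have "- (x - \<mu>)\<^sup>2 / (2 * \<sigma>\<^sup>2) + t * x
      = t * \<mu> + t\<^sup>2 * \<sigma>\<^sup>2 / 2 + - (x - (\<mu> + t * \<sigma>\<^sup>2))\<^sup>2 / (2 * \<sigma>\<^sup>2)"
    using assms by (simp add: field_simps power2_eq_square)
  then show ?thesis
    by (simp add: normal_density_def mult_exp_exp mult_ac)
qed

lemma nn_integral_normal_density_mult_exp:
  assumes "\<sigma> > 0"
  shows "(\<integral>\<^sup>+ x. ennreal (normal_density \<mu> \<sigma> x * exp (t * x)) \<partial>lborel)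
    = ennreal (exp (t * \<mu> + t\<^sup>2 * \<sigma>\<^sup>2 / 2))"
proof -
  have "(\<integral>\<^sup>+ x. ennreal (normal_density \<mu> \<sigma> x * exp (t * x)) \<partial>lborel)
      = ennreal (exp (t * \<mu> + t\<^sup>2 * \<sigma>\<^sup>2 / 2))
          * (\<integral>\<^sup>+ x. ennreal (normal_density (\<mu> + t * \<sigma>\<^sup>2) \<sigma> x) \<partial>lborel)"
    using assms
    by (simp add: normal_density_mult_exp ennreal_mult' nn_integral_cmult)
  also have "(\<integral>\<^sup>+ x. ennreal (normal_density (\<mu> + t * \<sigma>\<^sup>2) \<sigma> x) \<partial>lborel) = 1"
    using assms by (simp add: nn_integral_eq_integral)
  finally show ?thesis
    by simp
qed

lemma nn_integral_scale_mixture_density_mult_exp: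
  fixes p :: "real \<Rightarrow> real"
  assumes [measurable]: "p \<in> borel_measurable borel"
  shows "(\<integral>\<^sup>+ b. scale_mixture_density p b * ennreal (exp (t * b)) \<partial>lborel)
    = (\<integral>\<^sup>+ l \<in> {0<..}. ennreal (p l) * ennreal (exp (t\<^sup>2 / 2 * l)) \<partial>lborel)"
proof -
  let ?f = "\<lambda>l b. indicator {0<..} l * ennreal (normal_density 0 (sqrt l) b * p l)
    * ennreal (exp (t * b))"
  have inner: "(\<integral>\<^sup>+ b. ?f l b \<partial>lborel)
      = ennreal (p l) * ennreal (exp (t\<^sup>2 / 2 * l)) * indicator {0<..} l" for l
  proof (cases "l > 0")
    case True
    then have "(\<integral>\<^sup>+ b. ?f l b \<partial>lborel)
        = ennreal (p l) * (\<integral>\<^sup>+ b. ennreal (normal_density 0 (sqrt l) b * exp (t * b)) \<partial>lborel)"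
      by (simp add: ennreal_mult' ennreal_mult'' nn_integral_cmult[symmetric] mult_ac)
    with True show ?thesis
      by (simp add: nn_integral_normal_density_mult_exp)
  qed simp
  have "(\<integral>\<^sup>+ b. scale_mixture_density p b * ennreal (exp (t * b)) \<partial>lborel)
      = (\<integral>\<^sup>+ b. \<integral>\<^sup>+ l. ?f l b \<partial>lborel \<partial>lborel)"
    unfolding scale_mixture_density_def
    by (intro nn_integral_cong nn_integral_multc[symmetric]) (simp add: normal_density_def)
  also have "\<dots> = (\<integral>\<^sup>+ l. \<integral>\<^sup>+ b. ?f l b \<partial>lborel \<partial>lborel)"
    by (rule lborel_pair.Fubini') (simp add: normal_density_def)
  also have "\<dots> = (\<integral>\<^sup>+ l \<in> {0<..}. ennreal (p l) * ennreal (exp (t\<^sup>2 / 2 * l)) \<partial>lborel)"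
    by (simp only: inner)
  finally show ?thesis .
qed

lemma all_pos_half_square_iff: "(\<forall>t::real>0. P (t\<^sup>2 / 2)) \<longleftrightarrow> (\<forall>s::real>0. P s)"
proof
  assume P: "\<forall>t>0. P (t\<^sup>2 / 2)"
  show "\<forall>s>0. P s"
  proof (intro allI impI)
    fix s :: real
    assume "s > 0"
    then show "P s"
      using P[rule_format, of "sqrt (2 * s)"] by simp
  qed
qed simp

theorem lemma1:
  fixes p :: "real \<Rightarrow> real"
  assumes meas: "p \<in> borel_measurable borel"
    and nonneg: "\<And>l. p l \<ge> 0"
    and supp: "\<And>l. l \<le> 0 \<Longrightarrow> p l = 0"
    and prob: "(\<integral>\<^sup>+ l. ennreal (p l) \<partial>lborel) = 1"
  shows "heavy_tailed (scale_mixture_density p) \<longleftrightarrow> heavy_tailed (\<lambda>l. ennreal (p l))"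
proof -
  define M where "M s = (\<integral>\<^sup>+ l. ennreal (p l) * ennreal (exp (s * l)) \<partial>lborel)" for s
  have mixture_moment: "(\<integral>\<^sup>+ b. scale_mixture_density p b * ennreal (exp (t * b)) \<partial>lborel)
      = M (t\<^sup>2 / 2)" for t
    unfolding nn_integral_scale_mixture_density_mult_exp[OF meas] M_def
    by (intro nn_integral_cong) (simp add: supp indicator_def)
  have "heavy_tailed (scale_mixture_density p) \<longleftrightarrow> (\<forall>t::real>0. M (t\<^sup>2 / 2) = \<infinity>)"
    unfolding heavy_tailed_def mixture_moment ..
  also have "\<dots> \<longleftrightarrow> (\<forall>s::real>0. M s = \<infinity>)"
    by (rule all_pos_half_square_iff)
  also have "\<dots> \<longleftrightarrow> heavy_tailed (\<lambda>l. ennreal (p l))"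
    unfolding heavy_tailed_def M_def ..
  finally show ?thesis .
qed

end
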